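(* Let $a, b, n$ be positive integers with $b>1$, $n>1$ and $\gcd(r_b(n),a)=1$, and let $S = S_a(b,n)$. Then $S$ satisfies Wilf's inequality: $\operatorname{F}(S) \le \operatorname{e}(S)\,\operatorname{n}(S) - 1$.
   Context: For $\ell \ge 1$, $r_b(\ell) = \sum_{j=0}^{\ell-1} b^j$, and $r_b(0)=0$. For $i \ge 1$, $a_i := r_b(n) + a\, r_b(i-1)$; $S_a(b,n)$ is the numerical semigroup generated by $\{a_i : i \ge 1\}$. For a numerical semigroup $S$: $\operatorname{F}(S)$ is the largest integer not in $S$; $\operatorname{e}(S)$ is the embedding dimension (cardinality of the minimal generating set); $\operatorname{n}(S)$ is the cardinality of $\{s \in S : s < \operatorname{F}(S)\}$. *)

theory Defs
  imports Main
begin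

definition rb :: "nat \<Rightarrow> nat \<Rightarrow> nat" where
  "rb b l = (\<Sum>j<l. b ^ j)"

inductive_set gen_monoid :: "nat set \<Rightarrow> nat set" for A :: "nat set" where
  zero: "0 \<in> gen_monoid A"
| gen: "x \<in> A \<Longrightarrow> x \<in> gen_monoid A"
| add: "x \<in> gen_monoid A \<Longrightarrow> y \<in> gen_monoid A \<Longrightarrow> x + y \<in> gen_monoid A"

definition gen_a :: "nat \<Rightarrow> nat \<Rightarrow> nat \<Rightarrow> nat \<Rightarrow> nat" where
  "gen_a a b n i = rb b n + a * rb b (i - 1)"

definition S_abn :: "nat \<Rightarrow> nat \<Rightarrow> nat \<Rightarrow> nat set" where
  "S_abn a b n = gen_monoid (gen_a a b n ` {1..})"

definition frob :: "nat set \<Rightarrow> int" where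
  "frob S = (if UNIV - S = {} then -1 else int (Max (UNIV - S)))"

definition emb_dim :: "nat set \<Rightarrow> nat" where
  "emb_dim S = card (THE A. gen_monoid A = S \<and> (\<forall>B. B \<subset> A \<longrightarrow> gen_monoid B \<noteq> S))"

definition n_small :: "nat set \<Rightarrow> nat" where
  "n_small S = card {s \<in> S. int s < frob S}"

end

theory Submission
  imports Defs "HOL-Number_Theory.Cong"
begin

text \<open>
  Write \<open>r = r_b(n)\<close>. Every element of \<open>S\<close> can be written as \<open>W r + a X\<close> where the base-\<open>b\<close>
  digit sum of \<open>(b - 1) X + W\<close> is at most \<open>W\<close>: for the generator \<open>a\<^sub>i\<close> take \<open>W = 1\<close>,
  \<open>X = r_b(i - 1)\<close>, so that \<open>(b - 1) X + W = b\<^sup>i\<^sup>-\<^sup>1\<close>, and the property is preserved by sums since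
  digit sums are subadditive. Together with \<open>gcd(r, a) = 1\<close> this shows that \<open>a\<^sub>1, \<dots>, a\<^sub>n\<close> are
  irreducible, so \<open>e(S) = n\<close>, and that \<open>G = (b - 1)(n - 1) r + a (r - n + 1)\<close> is not in \<open>S\<close>, so
  \<open>F(S) \<ge> G\<close>: reducing modulo \<open>b\<^sup>n - 1\<close> does not increase digit sums, and \<open>b\<^sup>n - 1\<close> has digit sum
  \<open>n (b - 1)\<close>.

  Conversely, writing \<open>X < r\<close> greedily as a sum of the repunits \<open>r_b(n - 1), \<dots>, r_b(1)\<close> exhibits
  an element of \<open>S\<close> in every residue class modulo \<open>r = a\<^sub>1\<close>, which bounds the number \<open>g\<close> of gaps.
  As \<open>F(S) + 1 = n(S) + g\<close>, Wilf's inequality amounts to \<open>n g \<le> (n - 1)(F(S) + 1)\<close>, which follows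
  from the two bounds.
\<close>

section \<open>Repunits\<close>

lemma rb_0 [simp]: "rb b 0 = 0"
  by (simp add: rb_def)

lemma rb_1 [simp]: "rb b (Suc 0) = 1"
  by (simp add: rb_def)

lemma rb_Suc: "rb b (Suc l) = rb b l + b ^ l"
  by (simp add: rb_def)

lemma rb_add: "rb b (l + m) = rb b l + b ^ l * rb b m"
  by (induction m) (auto simp: rb_Suc algebra_simps power_add)

lemma rb_geometric:
  assumes "b \<ge> 1"
  shows "(b - 1) * rb b l + 1 = b ^ l"
proof (induction l)
  case 0
  then show ?case by simp
next
  case (Suc l)
  have "(b - 1) * rb b (Suc l) + 1 = b ^ l + (b - 1) * b ^ l"
    using Suc by (simp add: rb_Suc algebra_simps)
  also have "\<dots> = b ^ Suc l"
    using assms by (cases b) (auto simp: algebra_simps)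
  finally show ?case .
qed

lemma rb_strict_mono:
  assumes "b > 1" and "l < m"
  shows "rb b l < rb b m"
  using assms(2)
proof (induction m)
  case (Suc m)
  have "rb b m < rb b (Suc m)"
    using assms(1) by (simp add: rb_Suc)
  then show ?case
    using Suc by (cases "l = m") auto
qed simp

lemma rb_ge:
  assumes "b \<ge> 2"
  shows "rb b n \<ge> 2 * n - 1"
proof (induction n)
  case (Suc n)
  have "n \<ge> 1 \<Longrightarrow> b ^ n \<ge> 2"
    using assms by (metis power_one_right power_increasing le_trans one_le_numeral)
  then show ?case
    using Suc assms by (cases n) (auto simp: rb_Suc)
qed simp

section \<open>Base-\<open>b\<close> digit sums\<close>

function digit_sum :: "nat \<Rightarrow> nat \<Rightarrow> nat" where
  "digit_sum b x = (if b < 2 \<or> x = 0 then 0 else x mod b + digit_sum b (x div b))"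
  by auto
termination
  by (relation "measure snd") auto

declare digit_sum.simps [simp del]

lemma digit_sum_0 [simp]: "digit_sum b 0 = 0"
  by (simp add: digit_sum.simps)

lemma digit_sum_step: "b \<ge> 2 \<Longrightarrow> digit_sum b x = x mod b + digit_sum b (x div b)"
  by (cases "x = 0") (simp_all add: digit_sum.simps)

lemma digit_sum_digit: "b \<ge> 2 \<Longrightarrow> c < b \<Longrightarrow> digit_sum b c = c"
  by (simp add: digit_sum_step)

lemma digit_sum_le: "digit_sum b x \<le> x"
proof (induction x rule: less_induct)
  case (less x)
  show ?case
  proof (cases "b < 2 \<or> x = 0")
    case True
    then show ?thesis by (simp add: digit_sum.simps)
  next
    case False
    then have "digit_sum b (x div b) \<le> x div b"
      by (intro less) simp
    moreover have "x div b \<le> x div b * b"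
      using False by simp
    moreover have "digit_sum b x = x mod b + digit_sum b (x div b)"
      using False by (intro digit_sum_step) simp
    ultimately show ?thesis
      using div_mult_mod_eq[of x b] by linarith
  qed
qed

text \<open>Subadditivity: adding in base \<open>b\<close>, each carry lowers the digit sum by \<open>b - 1\<close>.\<close>
lemma digit_sum_add_le:
  assumes b: "b \<ge> 2"
  shows "digit_sum b (x + y) \<le> digit_sum b x + digit_sum b y"
proof (induction "x + y" arbitrary: x y rule: less_induct)
  case less
  show ?case
  proof (cases "x + y = 0")
    case True
    then show ?thesis by simp
  next
    case False
    define c where "c = (x mod b + y mod b) div b"
    have div: "(x + y) div b = x div b + (y div b + c)"
      unfolding c_def using div_add1_eq[of x y b] by (simp only: add.assoc)
    have mod: "(x + y) mod b + c * b = x mod b + y mod b"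
      unfolding c_def by (metis div_mult_mod_eq mod_add_eq add.commute)
    have lt: "(x + y) div b < x + y"
      using False b by simp
    have "x div b + (y div b + c) < x + y"
      using lt unfolding div .
    then have "digit_sum b ((x + y) div b) \<le> digit_sum b (x div b) + digit_sum b (y div b + c)"
      unfolding div by (rule less)
    moreover have "y div b + c < x + y"
      using lt unfolding div by linarith
    then have "digit_sum b (y div b + c) \<le> digit_sum b (y div b) + digit_sum b c"
      by (rule less)
    moreover have "c \<le> c * b"
      using b by simp
    then have "digit_sum b c \<le> c * b"
      using digit_sum_le[of b c] by linarith
    ultimately have "digit_sum b ((x + y) div b) \<le> digit_sum b (x div b) + digit_sum b (y div b) + c * b"
      by linarith
    then show ?thesis
      using digit_sum_step[OF b, of "x + y"] digit_sum_step[OF b, of x] digit_sum_step[OF b, of y] mod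
      by linarith
  qed
qed

lemma digit_sum_concat:
  assumes b: "b \<ge> 2" and "t < b ^ k"
  shows "digit_sum b (q * b ^ k + t) = digit_sum b q + digit_sum b t"
  using assms(2)
proof (induction k arbitrary: t)
  case (Suc k)
  have lt: "t div b < b ^ k"
    using Suc.prems b by (simp add: div_less_iff_less_mult mult.commute)
  have "(q * b ^ Suc k + t) mod b = t mod b"
    by (simp add: mod_add_left_eq[symmetric])
  moreover have "(q * b ^ Suc k + t) div b = q * b ^ k + t div b"
    using b by (simp add: div_add1_eq[of "q * b ^ Suc k" t b] mult.commute mult.left_commute)
  ultimately have "digit_sum b (q * b ^ Suc k + t) = t mod b + digit_sum b (q * b ^ k + t div b)"
    using digit_sum_step[OF b] by metis
  also have "\<dots> = digit_sum b q + digit_sum b t"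
    using Suc.IH[OF lt] digit_sum_step[OF b, of t] by simp
  finally show ?case .
qed simp

lemma digit_sum_power: "b \<ge> 2 \<Longrightarrow> digit_sum b (b ^ k) = 1"
  using digit_sum_concat[of b 0 k 1] by (simp add: digit_sum_digit)

lemma digit_sum_power_minus_1:
  assumes b: "b \<ge> 2"
  shows "digit_sum b (b ^ k - 1) = k * (b - 1)"
proof (induction k)
  case (Suc k)
  have pos: "b ^ k \<ge> 1"
    using b by simp
  have "b ^ Suc k - 1 = (b - 1) * b ^ k + (b ^ k - 1)"
    using pos b by (simp add: algebra_simps diff_mult_distrib)
  then have "digit_sum b (b ^ Suc k - 1) = digit_sum b (b - 1) + digit_sum b (b ^ k - 1)"
    using digit_sum_concat[OF b, of "b ^ k - 1" k "b - 1"] pos by simp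
  then show ?case
    using Suc b by (simp add: digit_sum_digit)
qed simp

lemma mod_eq_imp_eq_positive:
  fixes M N B :: nat
  assumes "1 \<le> M" "M \<le> B" "1 \<le> N" "N \<le> B" and "M mod B = N mod B"
  shows "M = N"
proof (cases "M = B \<or> N = B")
  case True
  then have "M mod B = 0 \<and> N mod B = 0"
    using assms(5) by auto
  then show ?thesis
    using assms by (cases "M < B"; cases "N < B") auto
next
  case False
  then show ?thesis
    using assms by simp
qed

text \<open>Casting out \<open>b\<^sup>k - 1\<close>: splitting off the top block \<open>M = q b\<^sup>k + t\<close> and replacing \<open>M\<close> by
  \<open>q + t \<equiv> M\<close> never increases the digit sum; the least positive representative is reached.\<close>
lemma digit_sum_mod_power_minus_1:
  assumes b: "b \<ge> 2" and k: "k \<ge> 1"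
    and "M \<ge> 1" and "1 \<le> N" and "N \<le> b ^ k - 1"
    and "M mod (b ^ k - 1) = N mod (b ^ k - 1)"
  shows "digit_sum b N \<le> digit_sum b M"
  using assms(3-)
proof (induction M rule: less_induct)
  case (less M)
  define B where "B = b ^ k - 1"
  have bk: "b ^ k \<ge> 2"
    using b k by (metis power_one_right power_increasing le_trans one_le_numeral)
  show ?case
  proof (cases "M \<le> B")
    case True
    then have "M = N"
      using less.prems mod_eq_imp_eq_positive[of M B N] unfolding B_def by simp
    then show ?thesis by simp
  next
    case False
    define q where "q = M div b ^ k"
    define t where "t = M mod b ^ k"
    have M: "M = q * b ^ k + t"
      unfolding q_def t_def by (metis div_mult_mod_eq)
    have t: "t < b ^ k"
      unfolding t_def using bk by (intro mod_less_divisor) linarith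
    have q1: "q \<ge> 1"
      unfolding q_def using False B_def bk b by (simp add: Suc_le_eq div_greater_zero_iff)
    have "M = (q + t) + q * B"
      using M bk q1 unfolding B_def by (simp add: diff_mult_distrib2)
    moreover have "q * 2 \<le> q * b ^ k"
      using bk by simp
    then have "q + t < M"
      using M q1 by linarith
    ultimately have "digit_sum b N \<le> digit_sum b (q + t)"
      using less.IH less.prems q1 unfolding B_def by simp
    also have "\<dots> \<le> digit_sum b q + digit_sum b t"
      by (rule digit_sum_add_le[OF b])
    also have "\<dots> = digit_sum b M"
      using digit_sum_concat[OF b t] M by simp
    finally show ?thesis .
  qed
qed

lemma digit_sum_power_minus_1_diff:
  assumes b: "b \<ge> 2" and "D \<le> b ^ k - 1"
  shows "k * (b - 1) \<le> digit_sum b (b ^ k - 1 - D) + D"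
proof -
  have "b ^ k - 1 - D + D = b ^ k - 1"
    using assms(2) by simp
  then have "k * (b - 1) \<le> digit_sum b (b ^ k - 1 - D) + digit_sum b D"
    using digit_sum_add_le[OF b, of "b ^ k - 1 - D" D] digit_sum_power_minus_1[OF b, of k] by simp
  then show ?thesis
    using digit_sum_le[of b D] by linarith
qed

section \<open>Submonoids of \<open>\<nat>\<close> and Wilf's inequality\<close>

lemma gen_monoid_mult: "x \<in> gen_monoid A \<Longrightarrow> k * x \<in> gen_monoid A"
  by (induction k) (auto intro: gen_monoid.intros)

lemma gen_monoid_least: "A \<subseteq> gen_monoid B \<Longrightarrow> gen_monoid A \<subseteq> gen_monoid B"
proof
  show "x \<in> gen_monoid B" if "x \<in> gen_monoid A" and "A \<subseteq> gen_monoid B" for x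
    using that by (induction rule: gen_monoid.induct) (auto intro: gen_monoid.intros)
qed

lemma gen_monoid_cases_sum:
  assumes "x \<in> gen_monoid A"
  shows "x = 0 \<or> x \<in> A \<or> (\<exists>y z. y \<in> gen_monoid A \<and> z \<in> gen_monoid A \<and> y \<noteq> 0 \<and> z \<noteq> 0 \<and> x = y + z)"
  using assms
proof (induction rule: gen_monoid.induct)
  case (add x y)
  then show ?case
    by (cases "x = 0"; cases "y = 0") (auto intro: gen_monoid.intros)
qed auto

text \<open>A generating set of nonzero atoms (elements that are not a sum of two nonzero elements) is
  contained in every generating set, hence it is the minimal one.\<close>
lemma emb_dim_eq_card_atoms:
  assumes gen: "gen_monoid M = S" and nonzero: "0 \<notin> M"
    and atoms: "\<And>x y z. x \<in> M \<Longrightarrow> y \<in> S \<Longrightarrow> z \<in> S \<Longrightarrow> y \<noteq> 0 \<Longrightarrow> z \<noteq> 0 \<Longrightarrow> x \<noteq> y + z"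
  shows "emb_dim S = card M"
proof -
  have subset: "M \<subseteq> A" if "gen_monoid A = S" for A
  proof
    fix x assume "x \<in> M"
    then have "x \<in> gen_monoid A"
      using gen that by (auto intro: gen_monoid.gen)
    then show "x \<in> A"
      using gen_monoid_cases_sum[of x A] atoms[OF \<open>x \<in> M\<close>] nonzero \<open>x \<in> M\<close> that by blast
  qed
  have "(THE A. gen_monoid A = S \<and> (\<forall>B. B \<subset> A \<longrightarrow> gen_monoid B \<noteq> S)) = M"
    using gen subset by (intro the_equality) blast+
  then show ?thesis
    unfolding emb_dim_def by simp
qed

lemma frob_eq_Max_gaps:
  assumes "UNIV - S \<noteq> {}"
  shows "frob S = int (Max (UNIV - S))"
  using assms by (simp add: frob_def)

lemma Max_gaps_Suc_eq:
  assumes fin: "finite (UNIV - S)" and ne: "UNIV - S \<noteq> {}"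
  shows "Max (UNIV - S) + 1 = n_small S + card (UNIV - S)"
proof -
  define F where "F = Max (UNIV - S)"
  have "F \<notin> S"
    unfolding F_def using Max_in[OF fin ne] by blast
  moreover have "x \<le> F" if "x \<notin> S" for x
    unfolding F_def using fin that by simp
  ultimately have "{..F} = {s \<in> S. s < F} \<union> (UNIV - S)"
    by (auto simp: order.order_iff_strict)
  then have "card {..F} = card {s \<in> S. s < F} + card (UNIV - S)"
    by (simp only:) (rule card_Un_disjoint; use fin in auto)
  then show ?thesis
    unfolding n_small_def frob_eq_Max_gaps[OF ne] F_def by simp
qed

lemma wilf_of_gap_bound:
  assumes fin: "finite (UNIV - S)" and ne: "UNIV - S \<noteq> {}" and e: "e \<ge> 1"
    and bound: "e * card (UNIV - S) \<le> (e - 1) * (Max (UNIV - S) + 1)"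
  shows "frob S \<le> int e * int (n_small S) - 1"
proof -
  define F where "F = Max (UNIV - S)"
  have "e * (F + 1) = e * n_small S + e * card (UNIV - S)"
    using Max_gaps_Suc_eq[OF fin ne] unfolding F_def by (metis add_mult_distrib2)
  moreover have "(e - 1) * (F + 1) + (F + 1) = e * (F + 1)"
    using e by (cases e) simp_all
  ultimately have "F + 1 \<le> e * n_small S"
    using bound unfolding F_def by linarith
  then have "int (F + 1) \<le> int (e * n_small S)"
    by (simp only: of_nat_le_iff)
  then show ?thesis
    unfolding frob_eq_Max_gaps[OF ne] F_def[symmetric] by simp
qed

text \<open>Apery-type bound: the gaps in the residue class of \<open>e i\<close> lie below \<open>e i\<close>.\<close>
lemma card_gaps_le_sum_div:
  fixes S :: "nat set" and r :: nat and e :: "'i \<Rightarrow> nat"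
  assumes r: "r > 0" and I: "finite I"
    and closed: "\<And>x. x \<in> S \<Longrightarrow> x + r \<in> S"
    and e: "\<And>i. i \<in> I \<Longrightarrow> e i \<in> S"
    and residues: "\<And>t. t < r \<Longrightarrow> \<exists>i\<in>I. e i mod r = t"
  shows "finite (UNIV - S) \<and> card (UNIV - S) \<le> (\<Sum>i\<in>I. e i div r)"
proof -
  define C where "C i = (\<lambda>k. e i mod r + k * r) ` {..< e i div r}" for i
  have shift: "x + j * r \<in> S" if "x \<in> S" for x j
    using that
  proof (induction j)
    case (Suc j)
    then show ?case
      using closed[of "x + j * r"] by (simp add: algebra_simps)
  qed simp
  have "y \<in> (\<Union>i\<in>I. C i)" if y: "y \<notin> S" for y
  proof -
    obtain i where i: "i \<in> I" "e i mod r = y mod r"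
      using residues[of "y mod r"] r by auto
    have "\<not> e i \<le> y"
    proof
      assume "e i \<le> y"
      then obtain j where "y = j * r + e i"
        using cong_le_nat[of "e i" y r] i(2) by (auto simp: cong_def)
      then show False
        using shift[OF e[OF i(1)], of j] y by (simp add: add.commute)
    qed
    have "y div r < e i div r"
    proof (rule ccontr)
      assume "\<not> ?thesis"
      then have "e i div r * r \<le> y div r * r"
        by simp
      then have "e i \<le> y"
        using div_mult_mod_eq[of "e i" r] div_mult_mod_eq[of y r] i(2) by linarith
      then show False
        using \<open>\<not> e i \<le> y\<close> by simp
    qed
    moreover have "y = e i mod r + y div r * r"
      using i(2) by simp
    ultimately show ?thesis
      unfolding C_def using i(1) by blast
  qed
  then have sub: "UNIV - S \<subseteq> (\<Union>i\<in>I. C i)"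
    by blast
  have fin: "finite (\<Union>i\<in>I. C i)"
    unfolding C_def using I by auto
  have "card (UNIV - S) \<le> card (\<Union>i\<in>I. C i)"
    using card_mono[OF fin sub] .
  also have "\<dots> \<le> (\<Sum>i\<in>I. card (C i))"
    by (rule card_UN_le[OF I])
  also have "\<dots> \<le> (\<Sum>i\<in>I. e i div r)"
    unfolding C_def by (intro sum_mono) (metis card_image_le card_lessThan finite_lessThan)
  finally show ?thesis
    using finite_subset[OF sub fin] by simp
qed

lemma exists_mult_mod_eq:
  fixes a r t :: nat
  assumes "coprime a r" and "r > 0"
  shows "\<exists>X<r. a * X mod r = t mod r"
proof -
  obtain x where x: "[a * x = 1] (mod r)"
    using cong_solve_coprime_nat[OF assms(1)] by auto
  have "[a * (x * t mod r) = a * x * t] (mod r)"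
    by (simp add: cong_def mod_mult_right_eq mult.assoc)
  also have "[a * x * t = 1 * t] (mod r)"
    using x by (rule cong_mult) simp
  finally show ?thesis
    using assms(2) by (intro exI[of _ "x * t mod r"]) (simp add: cong_def)
qed

text \<open>The pairing \<open>X \<leftrightarrow> r - X\<close> gives \<open>\<lfloor>a X / r\<rfloor> + \<lfloor>a (r - X) / r\<rfloor> = a - 1\<close>.\<close>
lemma sum_mult_div_le:
  fixes a r :: nat
  assumes r: "r > 0" and cop: "coprime r a"
  shows "2 * (\<Sum>X<r. a * X div r) \<le> (a - 1) * (r - 1)"
proof -
  define f where "f X = a * X div r" for X
  have pair: "f X + f (r - X) \<le> a - 1" if X: "X \<in> {1..<r}" for X
  proof -
    have "\<not> r dvd a * X"
      using X cop by (auto simp: coprime_dvd_mult_right_iff dest: dvd_imp_le)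
    then have "a * X mod r > 0"
      by (simp add: mod_eq_0_iff_dvd[symmetric])
    moreover have "f X * r + a * X mod r = a * X" "f (r - X) * r + a * (r - X) mod r = a * (r - X)"
      unfolding f_def by (rule div_mult_mod_eq)+
    moreover have "a * X + a * (r - X) = a * r"
      using X by (simp add: diff_mult_distrib2)
    ultimately have "(f X + f (r - X)) * r < a * r"
      by (simp add: add_mult_distrib)
    then show ?thesis
      by simp linarith
  qed
  have "(\<Sum>X<r. f X) = (\<Sum>X\<in>{1..<r}. f X)"
    using r by (simp add: f_def lessThan_atLeast0 sum.atLeast_Suc_lessThan)
  moreover have "(\<Sum>X\<in>{1..<r}. f (r - X)) = (\<Sum>X\<in>{1..<r}. f X)"
    by (rule sum.reindex_bij_witness[of _ "\<lambda>X. r - X" "\<lambda>X. r - X"]) auto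
  ultimately have "2 * (\<Sum>X<r. f X) = (\<Sum>X\<in>{1..<r}. f X + f (r - X))"
    by (simp add: sum.distrib)
  also have "\<dots> \<le> (\<Sum>X\<in>{1..<r}. a - 1)"
    by (rule sum_mono) (rule pair)
  finally show ?thesis
    unfolding f_def by (simp add: mult.commute)
qed

lemma coprime_linear_repr:
  fixes r a c W X X0 :: nat
  assumes cop: "coprime r a" and X0: "X0 < r" and eq: "c * r + a * X0 = W * r + a * X"
  shows "\<exists>k. X = X0 + r * k \<and> W + a * k = c"
proof (cases "X < X0")
  case True
  then have "a * (X0 - X) = (W - c) * r"
    using eq by (simp add: diff_mult_distrib diff_mult_distrib2)
  then have "r dvd X0 - X"
    using cop by (metis coprime_dvd_mult_right_iff dvd_triv_right)
  then show ?thesis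
    using True X0 by (metis less_imp_diff_less nat_dvd_not_less zero_less_diff)
next
  case False
  then have "a * (X - X0) = (c - W) * r"
    using eq by (simp add: diff_mult_distrib diff_mult_distrib2)
  then have "r dvd X - X0"
    using cop by (metis coprime_dvd_mult_right_iff dvd_triv_right)
  then obtain k where k: "X = X0 + r * k"
    using False by (metis dvd_def le_add_diff_inverse not_less)
  then have "c * r = W * r + a * k * r"
    using eq by (simp add: algebra_simps)
  then have "c = W + a * k"
    using X0 by (metis add_mult_distrib mult_cancel2 not_less0)
  then show ?thesis
    using k by auto
qed

section \<open>The semigroup \<open>S\<^sub>a(b, n)\<close>\<close>

lemma gen_a_1 [simp]: "gen_a a b n 1 = rb b n"
  by (simp add: gen_a_def)

lemma gen_a_in_S_abn: "i \<ge> 1 \<Longrightarrow> gen_a a b n i \<in> S_abn a b n"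
  unfolding S_abn_def by (auto intro: gen_monoid.gen)

lemma S_abn_add: "x \<in> S_abn a b n \<Longrightarrow> y \<in> S_abn a b n \<Longrightarrow> x + y \<in> S_abn a b n"
  unfolding S_abn_def by (rule gen_monoid.add)

lemma S_abn_mult: "x \<in> S_abn a b n \<Longrightarrow> k * x \<in> S_abn a b n"
  unfolding S_abn_def by (rule gen_monoid_mult)

lemma gen_a_shift:
  assumes "b \<ge> 1"
  shows "gen_a a b n (n + 1 + k) = gen_a a b n (k + 1) + (a + a * (b - 1) * rb b k) * gen_a a b n 1"
proof -
  have "rb b (n + k) = rb b n + ((b - 1) * rb b n + 1) * rb b k"
    using rb_add[of b n k] rb_geometric[OF assms, of n] by simp
  then show ?thesis
    unfolding gen_a_def by (simp add: algebra_simps)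
qed

lemma S_abn_eq_gen_monoid_first:
  assumes b: "b \<ge> 1" and n: "n \<ge> 1"
  shows "S_abn a b n = gen_monoid (gen_a a b n ` {1..n})"
proof
  have "gen_a a b n i \<in> gen_monoid (gen_a a b n ` {1..n})" if "i \<ge> 1" for i
    using that
  proof (induction i rule: less_induct)
    case (less i)
    show ?case
    proof (cases "i \<le> n")
      case True
      then show ?thesis
        using less.prems by (auto intro: gen_monoid.gen)
    next
      case False
      then obtain k where i: "i = n + 1 + k"
        by (metis add.commute add_Suc le_add_diff_inverse2 not_less_eq_eq Suc_eq_plus1)
      have "gen_a a b n (k + 1) \<in> gen_monoid (gen_a a b n ` {1..n})"
        using less.IH[of "k + 1"] i n by simp
      moreover have "gen_a a b n 1 \<in> gen_monoid (gen_a a b n ` {1..n})"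
        using n by (auto intro: gen_monoid.gen)
      ultimately show ?thesis
        unfolding i gen_a_shift[OF b] by (intro gen_monoid.add gen_monoid_mult)
    qed
  qed
  then show "S_abn a b n \<subseteq> gen_monoid (gen_a a b n ` {1..n})"
    unfolding S_abn_def by (intro gen_monoid_least) auto
  show "gen_monoid (gen_a a b n ` {1..n}) \<subseteq> S_abn a b n"
    unfolding S_abn_def by (intro gen_monoid_least) (auto intro: gen_monoid.gen)
qed

lemma S_abn_repr:
  assumes b: "b \<ge> 2" and y: "y \<in> S_abn a b n"
  shows "\<exists>W X. y = W * rb b n + a * X \<and> digit_sum b ((b - 1) * X + W) \<le> W \<and> (W = 0 \<longrightarrow> y = 0)"
  using y unfolding S_abn_def
proof (induction rule: gen_monoid.induct)
  case zero
  then show ?case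
    by (intro exI[of _ 0]) simp
next
  case (gen x)
  then obtain i where x: "x = rb b n + a * rb b (i - 1)"
    by (auto simp: gen_a_def)
  have "digit_sum b ((b - 1) * rb b (i - 1) + 1) = 1"
    using rb_geometric[of b "i - 1"] digit_sum_power[OF b] b by simp
  then show ?case
    using x by (intro exI[of _ 1] exI[of _ "rb b (i - 1)"]) simp
next
  case (add x y)
  then obtain W1 X1 W2 X2 where
    x: "x = W1 * rb b n + a * X1" "digit_sum b ((b - 1) * X1 + W1) \<le> W1" "W1 = 0 \<longrightarrow> x = 0" and
    y: "y = W2 * rb b n + a * X2" "digit_sum b ((b - 1) * X2 + W2) \<le> W2" "W2 = 0 \<longrightarrow> y = 0"
    by blast
  have "(b - 1) * (X1 + X2) + (W1 + W2) = ((b - 1) * X1 + W1) + ((b - 1) * X2 + W2)"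
    by (simp add: add_mult_distrib2)
  then have "digit_sum b ((b - 1) * (X1 + X2) + (W1 + W2)) \<le> W1 + W2"
    using digit_sum_add_le[OF b, of "(b - 1) * X1 + W1" "(b - 1) * X2 + W2"] x(2) y(2)
    by (simp only:)
  then show ?case
    using x y by (intro exI[of _ "W1 + W2"] exI[of _ "X1 + X2"]) (auto simp: algebra_simps)
qed

lemma gen_a_not_sum:
  assumes b: "b \<ge> 2" and cop: "coprime (rb b n) a" and i: "1 \<le> i" "i \<le> n"
    and y: "y \<in> S_abn a b n" "y \<noteq> 0" and z: "z \<in> S_abn a b n" "z \<noteq> 0"
  shows "gen_a a b n i \<noteq> y + z"
proof
  assume sum: "gen_a a b n i = y + z"
  obtain W1 X1 W2 X2 where
    W: "W1 \<noteq> 0" "W2 \<noteq> 0" and yz: "y = W1 * rb b n + a * X1" "z = W2 * rb b n + a * X2"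
    using S_abn_repr[OF b y(1)] S_abn_repr[OF b z(1)] y(2) z(2) by blast
  have "rb b (i - 1) < rb b n"
    using i b by (intro rb_strict_mono) auto
  moreover have "1 * rb b n + a * rb b (i - 1) = (W1 + W2) * rb b n + a * (X1 + X2)"
    using sum yz unfolding gen_a_def by (simp add: algebra_simps)
  ultimately obtain k where "W1 + W2 + a * k = 1"
    using coprime_linear_repr[OF cop] by blast
  then show False
    using W by simp
qed

lemma emb_dim_S_abn:
  assumes a: "a > 0" and b: "b \<ge> 2" and n: "n \<ge> 1" and cop: "coprime (rb b n) a"
  shows "emb_dim (S_abn a b n) = n"
proof -
  have "inj_on (gen_a a b n) {1..n}"
  proof (rule inj_onI)
    fix i j assume ij: "i \<in> {1..n}" "j \<in> {1..n}" "gen_a a b n i = gen_a a b n j"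
    then have "rb b (i - 1) = rb b (j - 1)"
      using a unfolding gen_a_def by simp
    then have "i - 1 = j - 1"
      using rb_strict_mono[of b "i - 1" "j - 1"] rb_strict_mono[of b "j - 1" "i - 1"] b
      by (cases "i - 1 < j - 1"; cases "j - 1 < i - 1") auto
    then show "i = j"
      using ij by auto
  qed
  moreover have "emb_dim (S_abn a b n) = card (gen_a a b n ` {1..n})"
  proof (rule emb_dim_eq_card_atoms)
    show "gen_monoid (gen_a a b n ` {1..n}) = S_abn a b n"
      using S_abn_eq_gen_monoid_first[of b n a] b n by simp
    show "0 \<notin> gen_a a b n ` {1..n}"
      using rb_strict_mono[of b 0 n] b n unfolding gen_a_def by auto
    show "x \<noteq> y + z" if "x \<in> gen_a a b n ` {1..n}" "y \<in> S_abn a b n" "z \<in> S_abn a b n"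
      "y \<noteq> 0" "z \<noteq> 0" for x y z
      using that gen_a_not_sum[OF b cop] by auto
  qed
  ultimately show ?thesis
    by (simp add: card_image)
qed

lemma S_abn_gap:
  assumes b: "b \<ge> 2" and n: "n \<ge> 2" and cop: "coprime (rb b n) a"
  shows "(b - 1) * (n - 1) * rb b n + a * (rb b n - n + 1) \<notin> S_abn a b n"
proof
  define r where "r = rb b n"
  define c where "c = (b - 1) * (n - 1)"
  define X0 where "X0 = r - n + 1"
  define B where "B = b ^ n - 1"
  have r: "r \<ge> 2 * n - 1"
    unfolding r_def by (rule rb_ge[OF b])
  have "X0 + (n - 1) = r"
    using r n unfolding X0_def by simp
  then have X0: "X0 < r" "(b - 1) * X0 + c = B"
    using n rb_geometric[of b n] b unfolding c_def B_def r_def by (auto simp: add_mult_distrib2[symmetric])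
  assume "(b - 1) * (n - 1) * rb b n + a * (rb b n - n + 1) \<in> S_abn a b n"
  then obtain W X where G: "(b - 1) * (n - 1) * rb b n + a * (rb b n - n + 1) = W * rb b n + a * X"
    and ds: "digit_sum b ((b - 1) * X + W) \<le> W"
    using S_abn_repr[OF b] by blast
  have eq: "c * r + a * X0 = W * r + a * X"
    using G unfolding c_def X0_def r_def .
  obtain k where X: "X = X0 + r * k" and W: "W + a * k = c"
    using coprime_linear_repr[OF cop[folded r_def] X0(1) eq] by blast
  have "c < B"
    using X0 r n b unfolding c_def by (simp add: X0_def)
  then have N: "1 \<le> B - a * k" "B - a * k \<le> b ^ n - 1"
    using W unfolding B_def by auto
  have "(b - 1) * r = B"
    using rb_geometric[of b n] b unfolding B_def r_def by simp
  then have "(b - 1) * X = (b - 1) * X0 + B * k"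
    unfolding X by (simp add: add_mult_distrib2 mult.assoc[symmetric])
  then have M: "(b - 1) * X + W = (B - a * k) + B * k"
    using X0(2) W by linarith
  then have "((b - 1) * X + W) mod B = (B - a * k) mod B" "(b - 1) * X + W \<ge> 1"
    using N by (simp_all only: mod_mult_self2)
  then have "digit_sum b (B - a * k) \<le> digit_sum b ((b - 1) * X + W)"
    using digit_sum_mod_power_minus_1[OF b, of n "(b - 1) * X + W" "B - a * k"] n N
    unfolding B_def by simp
  moreover have "n * (b - 1) \<le> digit_sum b (B - a * k) + a * k"
    using digit_sum_power_minus_1_diff[OF b, of "a * k" n] W \<open>c < B\<close> unfolding B_def by simp
  ultimately have "n * (b - 1) \<le> W + a * k"
    using ds by linarith
  then show False
    using W b n unfolding c_def by simp
qed

text \<open>Number of summands when \<open>X\<close> is written greedily as a sum of the repunits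
  \<open>r_b(m), r_b(m - 1), \<dots>, r_b(1)\<close>.\<close>
fun repunit_count :: "nat \<Rightarrow> nat \<Rightarrow> nat \<Rightarrow> nat" where
  "repunit_count b 0 X = 0"
| "repunit_count b (Suc m) X = X div rb b (Suc m) + repunit_count b m (X mod rb b (Suc m))"

lemma rb_Suc_pos: "rb b (Suc m) > 0"
  by (induction m) (auto simp: rb_Suc)

lemma repunit_count_0 [simp]: "repunit_count b m 0 = 0"
  by (induction m) auto

lemma repunit_count_in_S_abn:
  assumes "X < rb b (Suc m)"
  shows "repunit_count b m X * rb b n + a * X \<in> S_abn a b n"
  using assms
proof (induction m arbitrary: X)
  case 0
  then show ?case
    by (simp add: S_abn_def gen_monoid.zero)
next
  case (Suc m)
  define R where "R = rb b (Suc m)"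
  define Y where "Y = X mod R"
  have "a * X = a * (X div R * R) + a * Y"
    unfolding Y_def by (metis add_mult_distrib2 div_mult_mod_eq)
  then have "repunit_count b (Suc m) X * rb b n + a * X
      = X div R * gen_a a b n (Suc m + 1) + (repunit_count b m Y * rb b n + a * Y)"
    unfolding gen_a_def by (simp add: R_def Y_def algebra_simps)
  moreover have "Y < R"
    unfolding Y_def R_def using rb_Suc_pos by simp
  moreover have "X div R * gen_a a b n (Suc m + 1) \<in> S_abn a b n"
    by (intro S_abn_mult gen_a_in_S_abn) simp
  ultimately show ?case
    using Suc.IH[of Y] unfolding R_def by (simp add: S_abn_add)
qed

lemma sum_lessThan_mult_blocks:
  fixes f :: "nat \<Rightarrow> 'a::comm_monoid_add"
  shows "(\<Sum>X<k * R. f X) = (\<Sum>q<k. \<Sum>Y<R. f (q * R + Y))"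
proof -
  have "(\<Sum>X<k * R. f X) = (\<Sum>q<k. sum f {q * R..<q * R + R})"
    by (rule sum.nat_group[symmetric])
  also have "\<dots> = (\<Sum>q<k. \<Sum>Y<R. f (q * R + Y))"
  proof (rule sum.cong[OF refl])
    show "sum f {q * R..<q * R + R} = (\<Sum>Y<R. f (q * R + Y))" for q
      using sum.shift_bounds_nat_ivl[of f 0 "q * R" R] by (simp add: lessThan_atLeast0 ac_simps)
  qed
  finally show ?thesis .
qed

lemma repunit_count_sum:
  assumes b: "b \<ge> 2"
  shows "2 * (\<Sum>X<rb b (Suc m). repunit_count b m X) + 1 = m * b ^ Suc m + rb b (Suc m)"
proof (induction m)
  case 0
  then show ?case by simp
next
  case (Suc m)
  define R where "R = rb b (Suc m)"
  define T where "T = (\<Sum>X<R. repunit_count b m X)"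
  have R2: "rb b (Suc (Suc m)) = b * R + 1"
    unfolding R_def using rb_add[of b 1 "Suc m"] by simp
  have R: "R > 0"
    unfolding R_def by (rule rb_Suc_pos)
  have "(\<Sum>X<rb b (Suc (Suc m)). repunit_count b (Suc m) X)
      = (\<Sum>q<b. \<Sum>Y<R. repunit_count b (Suc m) (q * R + Y)) + repunit_count b (Suc m) (b * R)"
    unfolding R2 by (simp add: sum_lessThan_mult_blocks)
  also have "\<dots> = (\<Sum>q<b. R * q + T) + b"
    using R unfolding T_def R_def by (simp add: sum.distrib)
  also have "\<dots> = R * (\<Sum>q<b. q) + b * T + b"
    by (simp add: sum.distrib sum_distrib_left)
  finally have total: "(\<Sum>X<rb b (Suc (Suc m)). repunit_count b (Suc m) X) = R * (\<Sum>q<b. q) + b * T + b" .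
  define P where "P = b ^ Suc m"
  obtain p where p: "b = Suc p"
    using b by (cases b) auto
  have "R * (2 * (\<Sum>q<b. q) + b) = R * (b * b)"
    by (induction b) (auto simp: algebra_simps)
  moreover have "b * (2 * T + 1) = b * (m * P + R)"
    using Suc.IH unfolding T_def R_def P_def by simp
  moreover have "b * (p * R + 1) = b * P"
    using rb_geometric[of b "Suc m"] p unfolding R_def P_def by simp
  moreover have "b ^ Suc (Suc m) = b * P"
    unfolding P_def by simp
  ultimately show ?case
    unfolding total unfolding R2 by (simp only:) (simp add: p algebra_simps)
qed

lemma S_abn_card_gaps:
  assumes b: "b \<ge> 2" and n: "n \<ge> 1" and cop: "coprime (rb b n) a"
  shows "finite (UNIV - S_abn a b n)"
    and "2 * card (UNIV - S_abn a b n) \<le> (n - 1) * b ^ n + a * (rb b n - 1)"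
proof -
  define r where "r = rb b n"
  define e where "e X = repunit_count b (n - 1) X * r + a * X" for X
  have r: "r > 0"
    unfolding r_def using rb_Suc_pos[of b "n - 1"] n by simp
  have "finite (UNIV - S_abn a b n) \<and> card (UNIV - S_abn a b n) \<le> (\<Sum>X<r. e X div r)"
  proof (rule card_gaps_le_sum_div[OF r finite_lessThan])
    show "x + r \<in> S_abn a b n" if "x \<in> S_abn a b n" for x
      using S_abn_add[OF that gen_a_in_S_abn[of 1 a b n]] unfolding r_def gen_a_1 by simp
    show "e X \<in> S_abn a b n" if "X \<in> {..<r}" for X
      using that repunit_count_in_S_abn[of X b "n - 1" n a] n unfolding e_def r_def by simp
    show "\<exists>X\<in>{..<r}. e X mod r = t" if "t < r" for t
      using exists_mult_mod_eq[of a r t] cop r that unfolding e_def r_def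
      by (auto simp: coprime_commute)
  qed
  moreover have "(\<Sum>X<r. e X div r) = (\<Sum>X<r. repunit_count b (n - 1) X) + (\<Sum>X<r. a * X div r)"
    unfolding e_def using r by (simp add: sum.distrib)
  moreover have "2 * (\<Sum>X<r. repunit_count b (n - 1) X) + 1 = (n - 1) * b ^ n + r"
    using repunit_count_sum[OF b, of "n - 1"] n unfolding r_def by simp
  moreover have "2 * (\<Sum>X<r. a * X div r) \<le> (a - 1) * (r - 1)"
    using sum_mult_div_le[OF r] cop unfolding r_def by simp
  moreover have "r - 1 + (a - 1) * (r - 1) \<le> a * (r - 1)"
    using cop[folded r_def] by (cases a) simp_all
  ultimately show "finite (UNIV - S_abn a b n)"
    and "2 * card (UNIV - S_abn a b n) \<le> (n - 1) * b ^ n + a * (rb b n - 1)"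
    unfolding r_def by linarith+
qed

lemma wilf_polynomial_ineq:
  fixes n p r a :: int
  assumes n: "n \<ge> 2" and p: "p \<ge> 1" and r: "r \<ge> 2 * n - 1" and a: "a \<ge> 1"
  shows "n * ((n - 1) * (p * r + 1) + a * (r - 1)) \<le> 2 * (n - 1) * (p * (n - 1) * r + a * (r - n + 1) + 1)"
proof -
  have "2 * (n - 1) * (p * (n - 1) * r + a * (r - n + 1) + 1) - n * ((n - 1) * (p * r + 1) + a * (r - 1))
      = (n - 1) * (n - 2) * (p * r - 1) + a * ((n - 2) * r - 2 * (n - 1)\<^sup>2 + n)"
    by (simp add: algebra_simps power2_eq_square)
  moreover have "p * r \<ge> 1 * 1"
    using p r n by (intro mult_mono) auto
  then have "(n - 1) * (n - 2) * (p * r - 1) \<ge> 0"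
    using n by simp
  moreover have "(n - 2) * r \<ge> (n - 2) * (2 * n - 1)"
    using n r by (intro mult_left_mono) auto
  then have "(n - 2) * r - 2 * (n - 1)\<^sup>2 + n \<ge> 0"
    by (simp add: algebra_simps power2_eq_square)
  then have "a * ((n - 2) * r - 2 * (n - 1)\<^sup>2 + n) \<ge> 0"
    using a by simp
  ultimately show ?thesis
    by linarith
qed

lemma wilf_gap_count_ineq:
  fixes n p r a g F :: nat
  assumes n: "n \<ge> 2" and p: "p \<ge> 1" and r: "r \<ge> 2 * n - 1" and a: "a \<ge> 1"
    and g: "2 * g \<le> (n - 1) * (p * r + 1) + a * (r - 1)"
    and F: "p * (n - 1) * r + a * (r - n + 1) \<le> F"
  shows "n * g \<le> (n - 1) * (F + 1)"
proof -
  have diff: "int (n - 1) = int n - 1" "int (r - 1) = int r - 1" "int (r - n) = int r - int n"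
    using n r by auto
  have "int (2 * g) \<le> int ((n - 1) * (p * r + 1) + a * (r - 1))"
    using g by (simp only: of_nat_le_iff)
  then have "int n * (2 * int g) \<le> int n * ((int n - 1) * (int p * int r + 1) + int a * (int r - 1))"
    unfolding of_nat_add of_nat_mult of_nat_1 of_nat_numeral diff by (intro mult_left_mono) auto
  also have "\<dots> \<le> 2 * (int n - 1) * (int p * (int n - 1) * int r + int a * (int r - int n + 1) + 1)"
    using wilf_polynomial_ineq[of "int n" "int p" "int r" "int a"] n p r a by simp
  also have "\<dots> \<le> 2 * (int n - 1) * (int F + 1)"
  proof -
    have "int (p * (n - 1) * r + a * (r - n + 1)) \<le> int F"
      using F by (simp only: of_nat_le_iff)
    then show ?thesis
      unfolding of_nat_add of_nat_mult diff using n by (intro mult_left_mono) auto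
  qed
  finally have "int n * int g \<le> (int n - 1) * (int F + 1)"
    by (simp add: algebra_simps)
  then have "int (n * g) \<le> int ((n - 1) * (F + 1))"
    unfolding of_nat_add of_nat_mult of_nat_1 diff .
  then show ?thesis
    by (simp only: of_nat_le_iff)
qed

theorem mainTheorem20:
  fixes a b n :: nat
  assumes "a > 0" and "b > 1" and "n > 1"
    and "gcd (rb b n) a = 1"
  shows "frob (S_abn a b n)
           \<le> int (emb_dim (S_abn a b n)) * int (n_small (S_abn a b n)) - 1"
proof -
  define S where "S = S_abn a b n"
  define r where "r = rb b n"
  have a: "a \<ge> 1" and b: "b \<ge> 2" and n: "n \<ge> 2" and cop: "coprime (rb b n) a"
    using assms by (auto simp: coprime_iff_gcd_eq_1)
  have fin: "finite (UNIV - S)" and gaps: "2 * card (UNIV - S) \<le> (n - 1) * ((b - 1) * r + 1) + a * (r - 1)"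
    using S_abn_card_gaps[OF b _ cop] rb_geometric[of b n] b n unfolding S_def r_def by auto
  have "(b - 1) * (n - 1) * r + a * (r - n + 1) \<in> UNIV - S"
    using S_abn_gap[OF b n cop] unfolding S_def r_def by simp
  then have ne: "UNIV - S \<noteq> {}" and F: "(b - 1) * (n - 1) * r + a * (r - n + 1) \<le> Max (UNIV - S)"
    using fin by auto
  have "n * card (UNIV - S) \<le> (n - 1) * (Max (UNIV - S) + 1)"
    using wilf_gap_count_ineq[OF n _ _ a gaps F] rb_ge[OF b, of n] b unfolding r_def by simp
  then show ?thesis
    using wilf_of_gap_bound[OF fin ne] emb_dim_S_abn[OF assms(1) b _ cop] n unfolding S_def by simp
qed

end
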